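(* Let $Y$ be a closed subspace of real Banach spaces $Z$ and $W$, and let $\beta=\mathrm{dens}(Z/Y)$. Suppose the dual unit ball $B(W^* )$, with its weak$^*$ topology, contains a family $\{B_\alpha\}_{\alpha<\beta}$ of pairwise disjoint second category sets such that $B'=\bigcup_{\alpha<\beta}B_\alpha$ satisfies $B'\cap(-B')=\emptyset$. Then there is an isomorphic embedding $E:Z\to m_0(B(W^* ))$ which on $Y$ coincides with the natural embedding $y\mapsto[\,w^*\mapsto w^*(y)\,]$.
   Context: $\mathrm{dens}(V)$ is the density character of a Banach space $V$ (the minimal cardinality of a dense subset). For a compact Hausdorff space $K$: $\ell_\infty(K)$ is the space of bounded real functions on $K$ with the sup norm; $m(K)=\{f\in\ell_\infty(K): \mathrm{supp}(f)\text{ is a first category set in }K\}$; $m_0(K)=\ell_\infty(K)/m(K)$ with the quotient norm, and $[f]$ denotes the class of $f$. Here $K=B(W^* )$ with the weak$^*$ topology. *)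

theory Defs
  imports "HOL-Analysis.Analysis" "HOL-Library.Equipollence"
begin

definition dual_ball :: "('w::real_normed_vector \<Rightarrow>\<^sub>L real) set" where
  "dual_ball = {f. norm f \<le> 1}"

text \<open>The weak* topology on B(W*): the topology induced by pointwise convergence
  (pullback of the product topology on functions W -> R along evaluation).\<close>
definition weakstar_ball :: "('w::real_normed_vector \<Rightarrow>\<^sub>L real) topology" where
  "weakstar_ball = pullback_topology dual_ball blinfun_apply (powertop_real UNIV)"

definition nowhere_dense_in :: "'a topology \<Rightarrow> 'a set \<Rightarrow> bool" where
  "nowhere_dense_in X S \<longleftrightarrow> S \<subseteq> topspace X \<and> X interior_of (X closure_of S) = {}"

definition first_category_in :: "'a topology \<Rightarrow> 'a set \<Rightarrow> bool" where
  "first_category_in X S \<longleftrightarrow> S \<subseteq> topspace X \<and>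
     (\<exists>\<N>. countable \<N> \<and> (\<forall>N\<in>\<N>. nowhere_dense_in X N) \<and> S \<subseteq> \<Union>\<N>)"

definition second_category_in :: "'a topology \<Rightarrow> 'a set \<Rightarrow> bool" where
  "second_category_in X S \<longleftrightarrow> S \<subseteq> topspace X \<and> \<not> first_category_in X S"

text \<open>l_infty(K): bounded real functions on K = topspace X (values off K are irrelevant).\<close>
definition linf :: "'a topology \<Rightarrow> ('a \<Rightarrow> real) set" where
  "linf X = {f. \<exists>C. \<forall>k\<in>topspace X. \<bar>f k\<bar> \<le> C}"

definition sup_norm :: "'a topology \<Rightarrow> ('a \<Rightarrow> real) \<Rightarrow> real" where
  "sup_norm X f = (if topspace X = {} then 0 else (SUP k\<in>topspace X. \<bar>f k\<bar>))"

definition mK :: "'a topology \<Rightarrow> ('a \<Rightarrow> real) set" where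
  "mK X = {g \<in> linf X. first_category_in X {k \<in> topspace X. g k \<noteq> 0}}"

text \<open>m_0(K) = l_infty(K)/m(K): we work with representatives f in l_infty(K);
  [f] = [g] iff f - g in m(K), and the quotient norm of [f] is the distance of f to m(K).\<close>
definition same_class :: "'a topology \<Rightarrow> ('a \<Rightarrow> real) \<Rightarrow> ('a \<Rightarrow> real) \<Rightarrow> bool" where
  "same_class X f g \<longleftrightarrow> (\<lambda>k. f k - g k) \<in> mK X"

definition m0_norm :: "'a topology \<Rightarrow> ('a \<Rightarrow> real) \<Rightarrow> real" where
  "m0_norm X f = (INF g\<in>mK X. sup_norm X (\<lambda>k. f k - g k))"

text \<open>Isomorphic (linear, bounded and bounded below) embedding Z -> m_0(K), given through
  representatives E z in l_infty(K).\<close>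
definition iso_embedding_m0 :: "'a topology \<Rightarrow> ('z::real_normed_vector \<Rightarrow> 'a \<Rightarrow> real) \<Rightarrow> bool" where
  "iso_embedding_m0 X E \<longleftrightarrow>
     (\<forall>z. E z \<in> linf X) \<and>
     (\<forall>a b z z'. same_class X (E (a *\<^sub>R z + b *\<^sub>R z')) (\<lambda>k. a * E z k + b * E z' k)) \<and>
     (\<exists>c C. 0 < c \<and> (\<forall>z. c * norm z \<le> m0_norm X (E z) \<and> m0_norm X (E z) \<le> C * norm z))"

text \<open>Density character of the quotient Z/Y, Y the range of a subspace: the set A has
  cardinality dens(Z/Y), i.e. A is equipollent to a set D \<subseteq> Z whose image is dense in Z/Y
  (equivalently D + Y is dense in Z) and which has minimal cardinality among such sets.\<close>
definition dense_mod :: "'z::real_normed_vector set \<Rightarrow> 'z set \<Rightarrow> bool" where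
  "dense_mod Y D \<longleftrightarrow> closure {d + y | d y. d \<in> D \<and> y \<in> Y} = UNIV"

definition has_card_dens_quot :: "'z::real_normed_vector set \<Rightarrow> 'i set \<Rightarrow> bool" where
  "has_card_dens_quot Y A \<longleftrightarrow>
     (\<exists>D. dense_mod Y D \<and> (\<forall>D'. dense_mod Y D' \<longrightarrow> D \<lesssim> D') \<and> A \<approx> D)"

end

theory Submission
  imports Defs
begin

text \<open>
  By Hahn-Banach, every \<open>w \<in> B(W*)\<close> restricted to \<open>Y\<close> extends to a functional \<open>\<phi> w\<close> on \<open>Z\<close> of
  the same norm, and symmetrising makes \<open>\<phi>\<close> odd in \<open>w\<close>. For every \<open>d\<close> in a set \<open>D\<close> with \<open>D + Y\<close>
  dense there is a functional \<open>\<psi> d\<close> of norm at most 1 that vanishes on \<open>Y\<close> and has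
  \<open>\<psi> d d = dist(d, Y)\<close>. Index \<open>D\<close> by the sets \<open>B\<^sub>\<alpha>\<close> and put \<open>(E z) w = \<phi> w z + \<psi> d\<^sub>\<alpha> z\<close> whenever
  \<open>w\<close> or \<open>-w\<close> lies in \<open>B\<^sub>\<alpha>\<close>. Then \<open>E\<close> is linear, \<open>|E z| \<le> 2\<parallel>z\<parallel>\<close>, and \<open>E\<close> is the canonical
  embedding on \<open>Y\<close>. On \<open>B\<^sub>\<alpha>\<close> we have \<open>E z w + E z (-w) = 2 \<psi> d\<^sub>\<alpha> z\<close>, so \<open>|E z|\<close> is at least
  \<open>\<psi> d\<^sub>\<alpha> z\<close> on \<open>B\<^sub>\<alpha>\<close> or on \<open>-B\<^sub>\<alpha>\<close>, one of which is of second category; hence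
  \<open>\<parallel>[E z]\<parallel> \<ge> dist(z, Y)\<close>. The functionals almost norming \<open>y \<in> Y\<close> form a nonempty weak* open
  set, which is of second category by Baire's theorem because \<open>B(W*)\<close> is weak* compact; hence
  \<open>\<parallel>[E z]\<parallel> \<ge> \<parallel>y\<parallel> - 2\<parallel>z - y\<parallel>\<close>. Choosing \<open>y\<close> nearly closest to \<open>z\<close> gives \<open>\<parallel>z\<parallel> \<le> 4\<parallel>[E z]\<parallel>\<close>.
\<close>

section \<open>Hahn-Banach extension\<close>

text \<open>Partial linear functionals are handled through their graphs in \<open>V \<times> \<real>\<close>.\<close>

definition dominated_graph :: "('a::real_vector \<Rightarrow> real) \<Rightarrow> ('a \<times> real) set \<Rightarrow> bool" where
  "dominated_graph p G \<longleftrightarrow> subspace G \<and> (\<forall>x a b. (x, a) \<in> G \<longrightarrow> (x, b) \<in> G \<longrightarrow> a = b)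
     \<and> (\<forall>x a. (x, a) \<in> G \<longrightarrow> a \<le> p x)"

lemma dominated_graph_Union_chain:
  assumes "subset.chain {G. dominated_graph p G} C" "C \<noteq> {}"
  shows "dominated_graph p (\<Union>C)"
proof -
  have dom: "\<And>G. G \<in> C \<Longrightarrow> dominated_graph p G"
    and cmp: "\<And>G H. G \<in> C \<Longrightarrow> H \<in> C \<Longrightarrow> G \<subseteq> H \<or> H \<subseteq> G"
    using assms(1) unfolding subset.chain_def by blast+
  have common: "\<exists>G\<in>C. u \<in> G \<and> v \<in> G" if "u \<in> \<Union>C" "v \<in> \<Union>C" for u v
    using that cmp by blast
  have "subspace (\<Union>C)"
    unfolding subspace_def
  proof (intro conjI ballI allI)
    obtain G where "G \<in> C" using assms(2) by blast
    then show "0 \<in> \<Union>C" using dom unfolding dominated_graph_def subspace_def by blast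
  next
    fix u v assume "u \<in> \<Union>C" "v \<in> \<Union>C"
    then obtain G where "G \<in> C" "u \<in> G" "v \<in> G" using common by blast
    then show "u + v \<in> \<Union>C" using dom unfolding dominated_graph_def subspace_def by blast
  next
    fix c u assume "u \<in> \<Union>C"
    then show "c *\<^sub>R u \<in> \<Union>C" using dom unfolding dominated_graph_def subspace_def by blast
  qed
  moreover have "a = b" if "(x, a) \<in> \<Union>C" "(x, b) \<in> \<Union>C" for x a b
    using common[OF that] dom unfolding dominated_graph_def by blast
  moreover have "a \<le> p x" if "(x, a) \<in> \<Union>C" for x a
    using that dom unfolding dominated_graph_def by blast
  ultimately show ?thesis unfolding dominated_graph_def by blast
qed

lemma dominated_graph_gap:
  assumes p_add: "\<And>x y. p (x + y) \<le> p x + p y"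
    and G: "dominated_graph p G"
  obtains c where "\<And>s a. (s, a) \<in> G \<Longrightarrow> a - p (s - x0) \<le> c"
    and "\<And>s a. (s, a) \<in> G \<Longrightarrow> c \<le> p (s + x0) - a"
proof -
  have zero: "(0, 0) \<in> G"
    using G subspace_0 unfolding dominated_graph_def by (metis zero_prod_def)
  have gap: "a - p (s - x0) \<le> p (s' + x0) - a'" if "(s, a) \<in> G" "(s', a') \<in> G" for s a s' a'
  proof -
    have "(s + s', a + a') \<in> G"
      using G subspace_add[of G "(s, a)" "(s', a')"] that unfolding dominated_graph_def by simp
    then have "a + a' \<le> p ((s - x0) + (s' + x0))"
      using G unfolding dominated_graph_def by (simp add: algebra_simps)
    also have "\<dots> \<le> p (s - x0) + p (s' + x0)" by (rule p_add)
    finally show ?thesis by simp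
  qed
  define c where "c = (SUP z\<in>G. snd z - p (fst z - x0))"
  have bdd: "bdd_above ((\<lambda>z. snd z - p (fst z - x0)) ` G)"
    using gap[OF _ zero] by (intro bdd_aboveI2[where M = "p (0 + x0) - 0"]) auto
  show ?thesis
  proof
    show "a - p (s - x0) \<le> c" if "(s, a) \<in> G" for s a
      unfolding c_def using cSUP_upper[OF that bdd] by simp
    show "c \<le> p (s + x0) - a" if "(s, a) \<in> G" for s a
      unfolding c_def using zero gap[OF _ that] by (intro cSUP_least) auto
  qed
qed

lemma dominated_graph_scaled_gap:
  assumes p_add: "\<And>x y. p (x + y) \<le> p x + p y"
    and p_scale: "\<And>r x. r > 0 \<Longrightarrow> p (r *\<^sub>R x) = r * p x"
    and G: "dominated_graph p G"
  obtains c where "\<And>s a t. (s, a) \<in> G \<Longrightarrow> a + t * c \<le> p (s + t *\<^sub>R x0)"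
proof -
  obtain c where c_lower: "\<And>s a. (s, a) \<in> G \<Longrightarrow> a - p (s - x0) \<le> c"
    and c_upper: "\<And>s a. (s, a) \<in> G \<Longrightarrow> c \<le> p (s + x0) - a"
    using dominated_graph_gap[OF p_add G] by blast
  have scale: "(r *\<^sub>R s, r * a) \<in> G" if "(s, a) \<in> G" for r s a
    using G subspace_scale[of G "(s, a)" r] that unfolding dominated_graph_def by simp
  have "a + t * c \<le> p (s + t *\<^sub>R x0)" if sa: "(s, a) \<in> G" for s a t
  proof (cases t "0 :: real" rule: linorder_cases)
    case less
    have "(1 / - t) * a - p ((1 / - t) *\<^sub>R s - x0) \<le> c"
      using c_lower[OF scale[OF sa]] .
    then have "a - (- t) * p ((1 / - t) *\<^sub>R s - x0) \<le> - t * c"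
      using less by (simp add: field_simps)
    also have "(- t) * p ((1 / - t) *\<^sub>R s - x0) = p (s + t *\<^sub>R x0)"
      using p_scale[of "- t" "(1 / - t) *\<^sub>R s - x0"] less by (simp add: algebra_simps)
    finally show ?thesis by simp
  next
    case equal
    then show ?thesis
      using G sa unfolding dominated_graph_def by simp
  next
    case greater
    have "c \<le> p ((1 / t) *\<^sub>R s + x0) - (1 / t) * a"
      using c_upper[OF scale[OF sa]] .
    then have "t * c \<le> t * p ((1 / t) *\<^sub>R s + x0) - a"
      using greater by (simp add: field_simps)
    also have "t * p ((1 / t) *\<^sub>R s + x0) = p (s + t *\<^sub>R x0)"
      using p_scale[of t "(1 / t) *\<^sub>R s + x0"] greater by (simp add: algebra_simps)
    finally show ?thesis by simp
  qed
  then show ?thesis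
    using that by blast
qed

lemma dominated_graph_adjoin:
  assumes G: "dominated_graph p G" and new: "\<And>a. (x0, a) \<notin> G"
    and bound: "\<And>s a t. (s, a) \<in> G \<Longrightarrow> a + t * c \<le> p (s + t *\<^sub>R x0)"
  shows "dominated_graph p ((\<lambda>((s, a), t). (s + t *\<^sub>R x0, a + t * c)) ` (G \<times> UNIV))"
    (is "dominated_graph p ?G'")
proof -
  have Gs: "subspace G" and Gf: "\<And>x a b. (x, a) \<in> G \<Longrightarrow> (x, b) \<in> G \<Longrightarrow> a = b"
    using G unfolding dominated_graph_def by auto
  have "subspace ?G'"
    by (rule linear_subspace_image) (auto intro!: linearI subspace_Times Gs simp: algebra_simps)
  moreover have "a = b" if xa: "(x, a) \<in> ?G'" and xb: "(x, b) \<in> ?G'" for x a b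
  proof -
    obtain s1 a1 t1 s2 a2 t2 where m1: "(s1, a1) \<in> G" and m2: "(s2, a2) \<in> G"
      and x: "x = s1 + t1 *\<^sub>R x0" "x = s2 + t2 *\<^sub>R x0" and ab: "a = a1 + t1 * c" "b = a2 + t2 * c"
      using xa xb by fastforce
    have "t1 = t2"
    proof (rule ccontr)
      assume "t1 \<noteq> t2"
      moreover have "s1 - s2 = (t2 - t1) *\<^sub>R x0"
        using x by (simp add: algebra_simps)
      ultimately have "x0 = (1 / (t2 - t1)) *\<^sub>R (s1 - s2)"
        by simp
      moreover have "((1 / (t2 - t1)) *\<^sub>R (s1 - s2), (1 / (t2 - t1)) * (a1 - a2)) \<in> G"
        using subspace_scale[OF Gs subspace_diff[OF Gs m1 m2], of "1 / (t2 - t1)"] by simp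
      ultimately show False
        using new by metis
    qed
    then show ?thesis
      using x ab Gf[OF m1] m2 by simp
  qed
  moreover have "a \<le> p x" if "(x, a) \<in> ?G'" for x a
    using that bound by auto
  ultimately show ?thesis
    unfolding dominated_graph_def by blast
qed

lemma dominated_graph_extend:
  assumes p_add: "\<And>x y. p (x + y) \<le> p x + p y"
    and p_scale: "\<And>r x. r > 0 \<Longrightarrow> p (r *\<^sub>R x) = r * p x"
    and G: "dominated_graph p G"
  obtains G' where "dominated_graph p G'" "G \<subseteq> G'" "\<exists>c. (x0, c) \<in> G'"
proof (cases "\<exists>c. (x0, c) \<in> G")
  case True
  then show ?thesis
    using G that by blast
next
  case False
  obtain c where bound: "\<And>s a t. (s, a) \<in> G \<Longrightarrow> a + t * c \<le> p (s + t *\<^sub>R x0)"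
    using dominated_graph_scaled_gap[OF p_add p_scale G] by blast
  let ?G' = "(\<lambda>((s, a), t). (s + t *\<^sub>R x0, a + t * c)) ` (G \<times> UNIV)"
  have "G \<subseteq> ?G'"
    by (force intro: rev_image_eqI[of "(_, 0)"])
  moreover have "(x0, c) \<in> ?G'"
    using G subspace_0 unfolding dominated_graph_def
    by (force intro: rev_image_eqI[of "((0, 0), 1)"] simp: zero_prod_def)
  ultimately show ?thesis
    using that dominated_graph_adjoin[OF G _ bound] False by blast
qed

theorem hahn_banach_graph:
  assumes p_add: "\<And>x y. p (x + y) \<le> p x + p y"
    and p_scale: "\<And>r x. r > 0 \<Longrightarrow> p (r *\<^sub>R x) = r * p x"
    and G0: "dominated_graph p G0"
  obtains g where "linear g" "\<And>x a. (x, a) \<in> G0 \<Longrightarrow> g x = a" "\<And>x. g x \<le> p x"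
proof -
  let ?\<A> = "{G. dominated_graph p G \<and> G0 \<subseteq> G}"
  have "\<exists>M\<in>?\<A>. \<forall>G\<in>?\<A>. M \<subseteq> G \<longrightarrow> G = M"
  proof (rule subset_Zorn_nonempty)
    show "?\<A> \<noteq> {}" using G0 by auto
    show "\<Union>C \<in> ?\<A>" if "C \<noteq> {}" "subset.chain ?\<A> C" for C
      using that dominated_graph_Union_chain[of p C] unfolding subset.chain_def by blast
  qed
  then obtain M where M: "dominated_graph p M" "G0 \<subseteq> M"
    and maximal: "\<And>G. dominated_graph p G \<Longrightarrow> M \<subseteq> G \<Longrightarrow> G = M"
    by auto
  have Ms: "subspace M" and Mf: "\<And>x a b. (x, a) \<in> M \<Longrightarrow> (x, b) \<in> M \<Longrightarrow> a = b"
    and Mb: "\<And>x a. (x, a) \<in> M \<Longrightarrow> a \<le> p x"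
    using M(1) unfolding dominated_graph_def by auto
  have total: "\<exists>a. (x, a) \<in> M" for x
    using dominated_graph_extend[OF p_add p_scale M(1), of x] maximal by metis
  define g where "g x = (THE a. (x, a) \<in> M)" for x
  have graph: "(x, g x) \<in> M" for x
    unfolding g_def using total[of x] Mf by (metis theI)
  have g_eq: "g x = a" if "(x, a) \<in> M" for x a
    using Mf[OF graph that] .
  have add: "g (x + y) = g x + g y" for x y
    using subspace_add[OF Ms graph[of x] graph[of y]] by (intro g_eq) simp
  have scale: "g (r *\<^sub>R x) = r * g x" for r x
    using subspace_scale[OF Ms graph[of x], of r] by (intro g_eq) simp
  have "linear g"
    by (rule linearI) (simp_all add: add scale)
  then show ?thesis using that M(2) g_eq Mb graph by blast
qed

corollary hahn_banach_norm_extension: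
  fixes h :: "'b::real_vector \<Rightarrow> 'a::real_normed_vector" and l :: "'b \<Rightarrow> real"
  assumes "subspace S" "linear h" "linear l" "C \<ge> 0"
    and bound: "\<And>u. u \<in> S \<Longrightarrow> l u \<le> C * norm (h u)"
  shows "\<exists>g. linear g \<and> (\<forall>u\<in>S. g (h u) = l u) \<and> (\<forall>x. \<bar>g x\<bar> \<le> C * norm x)"
proof -
  let ?G0 = "(\<lambda>u. (h u, l u)) ` S"
  have well_defined: "l u = l v" if "u \<in> S" "v \<in> S" "h u = h v" for u v
  proof -
    have "l (u - v) \<le> 0" "l (v - u) \<le> 0"
      using bound[of "u - v"] bound[of "v - u"] that assms(1,2)
      by (simp_all add: linear_diff subspace_diff)
    then show ?thesis using assms(3) by (simp add: linear_diff)
  qed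
  have "subspace ?G0"
    using assms(1-3) by (intro linear_subspace_image linearI) (simp_all add: linear_add linear_scale)
  moreover have "a = b" if "(x, a) \<in> ?G0" "(x, b) \<in> ?G0" for x a b
    using that well_defined by blast
  moreover have "a \<le> C * norm x" if "(x, a) \<in> ?G0" for x a
    using that bound by blast
  ultimately have graph: "dominated_graph (\<lambda>x. C * norm x) ?G0"
    unfolding dominated_graph_def by blast
  have subadditive: "C * norm (x + y) \<le> C * norm x + C * norm y" for x y :: 'a
    using \<open>C \<ge> 0\<close> by (metis distrib_left mult_left_mono norm_triangle_ineq)
  have homogeneous: "C * norm (r *\<^sub>R x) = r * (C * norm x)" if "r > 0" for r and x :: 'a
    using that by simp
  obtain g where g: "linear g" "\<And>x a. (x, a) \<in> ?G0 \<Longrightarrow> g x = a" "\<And>x. g x \<le> C * norm x"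
    using hahn_banach_graph[OF subadditive homogeneous graph] by blast
  have extends: "g (h u) = l u" if "u \<in> S" for u
    using g(2)[OF imageI[OF that]] by simp
  have "\<bar>g x\<bar> \<le> C * norm x" for x
    using g(3)[of x] g(3)[of "- x"] linear_neg[OF g(1), of x] by simp
  with g(1) extends show ?thesis by blast
qed

section \<open>Norming and distance functionals\<close>

lemma dual_ball_Blinfun:
  fixes g :: "'a::real_normed_vector \<Rightarrow> real"
  assumes "linear g" "\<And>x. \<bar>g x\<bar> \<le> norm x"
  shows "Blinfun g \<in> dual_ball" "blinfun_apply (Blinfun g) = g"
proof -
  have "bounded_linear g"
    using assms by (intro bounded_linear_intro[where K = 1]) (auto simp: linear_add linear_scale)
  then show apply_eq: "blinfun_apply (Blinfun g) = g"
    by (rule bounded_linear_Blinfun_apply)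
  show "Blinfun g \<in> dual_ball"
    unfolding dual_ball_def using assms(2) by (auto intro!: norm_blinfun_bound simp: apply_eq)
qed

lemma norming_functional_exists:
  fixes x :: "'a::real_normed_vector"
  obtains w :: "'a \<Rightarrow>\<^sub>L real" where "w \<in> dual_ball" "blinfun_apply w x = norm x"
proof -
  have lin: "linear (\<lambda>t. t *\<^sub>R x)" "linear (\<lambda>t. t * norm x)"
    by (auto intro!: linearI simp: algebra_simps)
  have bound: "t * norm x \<le> 1 * norm (t *\<^sub>R x)" for t
    by (simp add: mult_right_mono)
  obtain g where g: "linear g" "\<And>t. g (t *\<^sub>R x) = t * norm x" "\<And>v. \<bar>g v\<bar> \<le> 1 * norm v"
    using hahn_banach_norm_extension[OF subspace_UNIV lin zero_le_one bound] by auto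
  show ?thesis
    using that[of "Blinfun g"] dual_ball_Blinfun[of g] g(1,3) g(2)[of 1] by simp
qed

lemma scaled_infdist_le_norm:
  assumes "subspace Y" "y \<in> Y"
  shows "t * infdist d Y \<le> norm (y + t *\<^sub>R d)"
proof (cases "t > 0")
  case True
  have "- (1 / t) *\<^sub>R y \<in> Y"
    using assms by (simp add: subspace_neg subspace_scale)
  then have "infdist d Y \<le> dist d (- (1 / t) *\<^sub>R y)"
    by (rule infdist_le)
  also have "\<dots> = norm ((1 / t) *\<^sub>R (y + t *\<^sub>R d))"
    using True by (simp add: dist_norm scaleR_right_distrib add.commute)
  also have "\<dots> = norm (y + t *\<^sub>R d) / t"
    using True by simp
  finally show ?thesis
    using True by (simp add: field_simps)
next
  case False
  then show ?thesis
    using infdist_nonneg[of d Y] by (metis mult_nonpos_nonneg norm_ge_zero not_less order.trans)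
qed

definition distance_functional :: "'a::real_normed_vector set \<Rightarrow> 'a \<Rightarrow> ('a \<Rightarrow> real) \<Rightarrow> bool" where
  "distance_functional Y d f \<longleftrightarrow>
     linear f \<and> (\<forall>y\<in>Y. f y = 0) \<and> f d = infdist d Y \<and> (\<forall>x. \<bar>f x\<bar> \<le> norm x)"

lemma distance_functional_exists:
  assumes "subspace Y"
  shows "\<exists>f. distance_functional Y d f"
proof -
  have sub: "subspace (Y \<times> UNIV)"
    using assms by (simp add: subspace_Times)
  have lin: "linear (\<lambda>u. fst u + snd u *\<^sub>R d)" "linear (\<lambda>u. snd u * infdist d Y)"
    by (auto intro!: linearI simp: algebra_simps)
  have bound: "snd u * infdist d Y \<le> 1 * norm (fst u + snd u *\<^sub>R d)" if "u \<in> Y \<times> UNIV" for u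
    using scaled_infdist_le_norm[OF assms] that by auto
  obtain g where g: "linear g"
    "\<And>u. u \<in> Y \<times> UNIV \<Longrightarrow> g (fst u + snd u *\<^sub>R d) = snd u * infdist d Y"
    "\<And>x. \<bar>g x\<bar> \<le> 1 * norm x"
    using hahn_banach_norm_extension[OF sub lin zero_le_one bound] by auto
  have "g y = 0" if "y \<in> Y" for y
    using g(2)[of "(y, 0)"] that by simp
  moreover have "g d = infdist d Y"
    using g(2)[of "(0, 1)"] subspace_0[OF assms] by simp
  ultimately show ?thesis
    using g(1,3) unfolding distance_functional_def by auto
qed

section \<open>The representing functions\<close>

lemma norm_preserving_extension:
  fixes jZ :: "'y::real_vector \<Rightarrow> 'z::real_normed_vector" and jW :: "'y \<Rightarrow> 'w::real_normed_vector"
  assumes "linear jZ" "linear jW" "\<And>y. norm (jW y) \<le> norm (jZ y)"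
  shows "\<exists>f. linear f \<and> (\<forall>y. f (jZ y) = blinfun_apply w (jW y)) \<and> (\<forall>z. \<bar>f z\<bar> \<le> norm w * norm z)"
proof -
  have lin: "linear (\<lambda>y. blinfun_apply w (jW y))"
    using linear_compose[OF assms(2) bounded_linear.linear[OF blinfun.bounded_linear_right]]
    by (simp add: o_def)
  have bound: "blinfun_apply w (jW y) \<le> norm w * norm (jZ y)" for y
  proof -
    have "blinfun_apply w (jW y) \<le> norm w * norm (jW y)"
      using norm_blinfun[of w "jW y"] by (simp add: abs_le_iff)
    also have "\<dots> \<le> norm w * norm (jZ y)"
      by (rule mult_left_mono[OF assms(3) norm_ge_zero])
    finally show ?thesis .
  qed
  show ?thesis
    using hahn_banach_norm_extension[OF subspace_UNIV assms(1) lin norm_ge_zero bound] by simp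
qed

lemma odd_norm_preserving_extensions:
  fixes jZ :: "'y::real_vector \<Rightarrow> 'z::real_normed_vector" and jW :: "'y \<Rightarrow> 'w::real_normed_vector"
  assumes "linear jZ" "linear jW" "\<And>y. norm (jW y) \<le> norm (jZ y)"
  obtains \<phi> :: "('w \<Rightarrow>\<^sub>L real) \<Rightarrow> 'z \<Rightarrow> real"
  where "\<And>w. linear (\<phi> w)" "\<And>w y. \<phi> w (jZ y) = blinfun_apply w (jW y)"
    "\<And>w z. \<bar>\<phi> w z\<bar> \<le> norm w * norm z" "\<And>w z. \<phi> (- w) z = - \<phi> w z"
proof -
  obtain f where f: "\<And>w. linear (f w)" "\<And>w y. f w (jZ y) = blinfun_apply w (jW y)"
    "\<And>w z. \<bar>f w z\<bar> \<le> norm w * norm z"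
    using norm_preserving_extension[OF assms] by metis
  define \<phi> where "\<phi> w z = (f w z - f (- w) z) / 2" for w z
  show ?thesis
  proof
    show "linear (\<phi> w)" for w
      unfolding \<phi>_def
      by (rule linearI) (simp_all add: linear_add[OF f(1)] linear_scale[OF f(1)] field_simps)
    show "\<phi> w (jZ y) = blinfun_apply w (jW y)" for w y
      unfolding \<phi>_def by (simp add: f(2) blinfun.minus_left)
    show "\<bar>\<phi> w z\<bar> \<le> norm w * norm z" for w z
      using f(3)[of w z] f(3)[of "- w" z] unfolding \<phi>_def by simp
    show "\<phi> (- w) z = - \<phi> w z" for w z
      unfolding \<phi>_def by (simp add: field_simps)
  qed
qed

text \<open>Off \<open>\<Union>B \<union> -\<Union>B\<close> the index is an arbitrary junk value, which is why the correction
  functionals below are required to be admissible at every index.\<close>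

definition block_index :: "'i set \<Rightarrow> ('i \<Rightarrow> 'a::uminus set) \<Rightarrow> 'a \<Rightarrow> 'i" where
  "block_index A B w = (SOME \<alpha>. \<alpha> \<in> A \<and> (w \<in> B \<alpha> \<or> - w \<in> B \<alpha>))"

lemma block_index_uminus: "block_index A B (- w) = block_index A B (w :: 'a::group_add)"
  unfolding block_index_def by (simp add: disj_commute)

lemma block_index_eq:
  assumes disjoint: "\<And>\<alpha> \<gamma>. \<alpha> \<in> A \<Longrightarrow> \<gamma> \<in> A \<Longrightarrow> \<alpha> \<noteq> \<gamma> \<Longrightarrow> B \<alpha> \<inter> B \<gamma> = {}"
    and antipodal: "(\<Union>\<alpha>\<in>A. B \<alpha>) \<inter> uminus ` (\<Union>\<alpha>\<in>A. B \<alpha>) = {}"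
    and "\<alpha> \<in> A" "w \<in> B \<alpha>"
  shows "block_index A B (w :: 'a::group_add) = \<alpha>"
proof -
  have unique: "\<gamma> = \<alpha>" if "\<gamma> \<in> A" "w \<in> B \<gamma> \<or> - w \<in> B \<gamma>" for \<gamma>
  proof -
    have "- w \<notin> B \<gamma>"
    proof
      assume "- w \<in> B \<gamma>"
      then have "w \<in> uminus ` (\<Union>\<alpha>\<in>A. B \<alpha>)"
        using \<open>\<gamma> \<in> A\<close> by (intro image_eqI[of _ _ "- w"]) auto
      then show False
        using antipodal \<open>\<alpha> \<in> A\<close> \<open>w \<in> B \<alpha>\<close> by blast
    qed
    then have "w \<in> B \<gamma>"
      using that(2) by blast
    then show ?thesis
      using disjoint[OF \<open>\<gamma> \<in> A\<close> \<open>\<alpha> \<in> A\<close>] \<open>w \<in> B \<alpha>\<close> by (metis IntI empty_iff)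
  qed
  show ?thesis
    unfolding block_index_def
  proof (rule some_equality)
    show "\<alpha> \<in> A \<and> (w \<in> B \<alpha> \<or> - w \<in> B \<alpha>)"
      using assms(3,4) by simp
    show "\<gamma> = \<alpha>" if "\<gamma> \<in> A \<and> (w \<in> B \<gamma> \<or> - w \<in> B \<gamma>)" for \<gamma>
      using unique that by blast
  qed
qed

lemma glued_representation_exists:
  fixes jZ :: "'y::real_vector \<Rightarrow> 'z::real_normed_vector" and jW :: "'y \<Rightarrow> 'w::real_normed_vector"
    and \<psi> :: "'i \<Rightarrow> 'z \<Rightarrow> real" and B :: "'i \<Rightarrow> ('w \<Rightarrow>\<^sub>L real) set"
  assumes "linear jZ" "linear jW" "\<And>y. norm (jW y) \<le> norm (jZ y)"
    and \<psi>: "\<And>i. linear (\<psi> i)" "\<And>i y. \<psi> i (jZ y) = 0" "\<And>i z. \<bar>\<psi> i z\<bar> \<le> norm z"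
    and disjoint: "\<And>\<alpha> \<gamma>. \<alpha> \<in> A \<Longrightarrow> \<gamma> \<in> A \<Longrightarrow> \<alpha> \<noteq> \<gamma> \<Longrightarrow> B \<alpha> \<inter> B \<gamma> = {}"
    and antipodal: "(\<Union>\<alpha>\<in>A. B \<alpha>) \<inter> uminus ` (\<Union>\<alpha>\<in>A. B \<alpha>) = {}"
  obtains E :: "'z \<Rightarrow> ('w \<Rightarrow>\<^sub>L real) \<Rightarrow> real"
  where "\<And>w. linear (\<lambda>z. E z w)" "\<And>z w. w \<in> dual_ball \<Longrightarrow> \<bar>E z w\<bar> \<le> 2 * norm z"
    "\<And>y w. E (jZ y) w = blinfun_apply w (jW y)"
    "\<And>\<alpha> w z. \<alpha> \<in> A \<Longrightarrow> w \<in> B \<alpha> \<Longrightarrow> E z w + E z (- w) = 2 * \<psi> \<alpha> z"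
proof -
  obtain \<phi> :: "('w \<Rightarrow>\<^sub>L real) \<Rightarrow> 'z \<Rightarrow> real" where \<phi>: "\<And>w. linear (\<phi> w)"
    "\<And>w y. \<phi> w (jZ y) = blinfun_apply w (jW y)" "\<And>w z. \<bar>\<phi> w z\<bar> \<le> norm w * norm z" "\<And>w z. \<phi> (- w) z = - \<phi> w z"
    using odd_norm_preserving_extensions[OF assms(1-3)] by blast
  define E where "E z w = \<phi> w z + \<psi> (block_index A B w) z" for z w
  show ?thesis
  proof
    show "linear (\<lambda>z. E z w)" for w
      unfolding E_def using linear_compose_add[OF \<phi>(1) \<psi>(1)] by simp
    show "\<bar>E z w\<bar> \<le> 2 * norm z" if "w \<in> dual_ball" for z w
    proof -
      have "\<bar>\<phi> w z\<bar> \<le> norm z"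
        using \<phi>(3)[of w z] that mult_right_mono[of "norm w" 1 "norm z"]
        unfolding dual_ball_def by simp
      then show ?thesis
        using \<psi>(3)[of "block_index A B w" z] unfolding E_def by linarith
    qed
    show "E (jZ y) w = blinfun_apply w (jW y)" for y w
      unfolding E_def by (simp add: \<phi>(2) \<psi>(2))
    show "E z w + E z (- w) = 2 * \<psi> \<alpha> z" if "\<alpha> \<in> A" "w \<in> B \<alpha>" for \<alpha> w z
      using block_index_eq[OF disjoint antipodal that] unfolding E_def
      by (simp add: block_index_uminus \<phi>(4))
  qed
qed

section \<open>Sets of first and second category\<close>

lemma first_category_in_empty: "first_category_in X {}"
  unfolding first_category_in_def by (intro conjI exI[of _ "{}"]) simp_all

lemma first_category_in_subset:
  assumes "first_category_in X S" "T \<subseteq> S"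
  shows "first_category_in X T"
  using assms unfolding first_category_in_def by (meson order_trans)

lemma first_category_in_Un:
  assumes "first_category_in X S" "first_category_in X T"
  shows "first_category_in X (S \<union> T)"
proof -
  obtain \<M> \<N> where "countable \<M>" "\<forall>M\<in>\<M>. nowhere_dense_in X M" "S \<subseteq> \<Union>\<M>"
    and "countable \<N>" "\<forall>N\<in>\<N>. nowhere_dense_in X N" "T \<subseteq> \<Union>\<N>"
    using assms unfolding first_category_in_def by blast
  then show ?thesis
    using assms unfolding first_category_in_def by (intro conjI exI[of _ "\<M> \<union> \<N>"]) auto
qed

lemma nowhere_dense_in_homeomorphic_image:
  assumes h: "homeomorphic_map X Y h" and "nowhere_dense_in X S"
  shows "nowhere_dense_in Y (h ` S)"
proof -
  have S: "S \<subseteq> topspace X" "X interior_of (X closure_of S) = {}"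
    using assms(2) unfolding nowhere_dense_in_def by auto
  have "Y interior_of (Y closure_of (h ` S)) = h ` (X interior_of (X closure_of S))"
    using homeomorphic_map_closure_of[OF h S(1)] homeomorphic_map_interior_of[OF h closure_of_subset_topspace]
    by simp
  moreover have "h ` S \<subseteq> topspace Y"
    using S(1) homeomorphic_imp_surjective_map[OF h] by blast
  ultimately show ?thesis
    unfolding nowhere_dense_in_def using S(2) by simp
qed

lemma first_category_in_homeomorphic_image:
  assumes h: "homeomorphic_map X Y h" and "first_category_in X S"
  shows "first_category_in Y (h ` S)"
proof -
  obtain \<N> where \<N>: "S \<subseteq> topspace X" "countable \<N>" "\<forall>N\<in>\<N>. nowhere_dense_in X N" "S \<subseteq> \<Union>\<N>"
    using assms(2) unfolding first_category_in_def by blast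
  have "h ` S \<subseteq> topspace Y"
    using \<N>(1) homeomorphic_imp_surjective_map[OF h] by blast
  moreover have "\<forall>N\<in>(`) h ` \<N>. nowhere_dense_in Y N"
    using \<N>(3) nowhere_dense_in_homeomorphic_image[OF h] by blast
  moreover have "h ` S \<subseteq> \<Union>((`) h ` \<N>)"
    using \<N>(4) by blast
  ultimately show ?thesis
    unfolding first_category_in_def using \<N>(2) by blast
qed

lemma second_category_in_Un:
  assumes "second_category_in X (S \<union> T)"
  shows "second_category_in X S \<or> second_category_in X T"
  using assms first_category_in_Un unfolding second_category_in_def by blast

lemma second_category_in_homeomorphic_image:
  assumes h: "homeomorphic_map X Y h" and "second_category_in X S"
  shows "second_category_in Y (h ` S)"
proof -
  have S: "S \<subseteq> topspace X" "\<not> first_category_in X S"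
    using assms(2) unfolding second_category_in_def by auto
  obtain g where g: "homeomorphic_maps X Y h g"
    using h unfolding homeomorphic_map_maps by blast
  have "g ` h ` S = S"
  proof -
    have "g (h x) = x" if "x \<in> S" for x
      using g S(1) that unfolding homeomorphic_maps_def by blast
    then show ?thesis
      by (simp add: image_image)
  qed
  have "\<not> first_category_in Y (h ` S)"
  proof
    assume "first_category_in Y (h ` S)"
    with homeomorphic_maps_imp_map[OF homeomorphic_maps_sym[THEN iffD1, OF g]]
    have "first_category_in X (g ` h ` S)"
      by (rule first_category_in_homeomorphic_image)
    with S(2) \<open>g ` h ` S = S\<close> show False
      by simp
  qed
  moreover have "h ` S \<subseteq> topspace Y"
    using S(1) homeomorphic_imp_surjective_map[OF h] by blast
  ultimately show ?thesis
    unfolding second_category_in_def by blast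
qed

lemma Baire_openin_second_category:
  assumes "completely_metrizable_space X \<or> locally_compact_space X \<and> regular_space X"
    and "openin X U" "U \<noteq> {}"
  shows "second_category_in X U"
proof -
  have "\<not> first_category_in X U"
  proof
    assume "first_category_in X U"
    then obtain \<N> where \<N>: "countable \<N>" "\<forall>N\<in>\<N>. nowhere_dense_in X N" "U \<subseteq> \<Union>\<N>"
      unfolding first_category_in_def by blast
    have "X interior_of \<Union>((closure_of) X ` \<N>) = {}"
    proof (rule Baire_category_alt[OF assms(1)])
      show "countable ((closure_of) X ` \<N>)"
        using \<N>(1) by simp
      show "closedin X T \<and> X interior_of T = {}" if "T \<in> (closure_of) X ` \<N>" for T
        using that \<N>(2) unfolding nowhere_dense_in_def by auto
    qed
    moreover have "U \<subseteq> \<Union>((closure_of) X ` \<N>)"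
    proof
      fix u
      assume "u \<in> U"
      then obtain N where N: "N \<in> \<N>" "u \<in> N"
        using \<N>(3) by blast
      then have "N \<subseteq> topspace X"
        using \<N>(2) unfolding nowhere_dense_in_def by blast
      then show "u \<in> \<Union>((closure_of) X ` \<N>)"
        using N closure_of_subset by blast
    qed
    ultimately show False
      using assms(2,3) interior_of_maximal by blast
  qed
  then show ?thesis
    unfolding second_category_in_def using openin_subset[OF assms(2)] by blast
qed

section \<open>The weak* topology on the dual ball\<close>

lemma topspace_weakstar_ball:
  "topspace (weakstar_ball :: ('a::real_normed_vector \<Rightarrow>\<^sub>L real) topology) = dual_ball"
  by (simp add: weakstar_ball_def topspace_pullback_topology)

lemma continuous_map_weakstar_ball_apply:
  "continuous_map (weakstar_ball :: ('a::real_normed_vector \<Rightarrow>\<^sub>L real) topology) euclideanreal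
     (\<lambda>w. blinfun_apply w x)"
proof -
  have "continuous_map weakstar_ball euclideanreal ((\<lambda>f. f x) \<circ> (blinfun_apply :: ('a \<Rightarrow>\<^sub>L real) \<Rightarrow> _))"
    unfolding weakstar_ball_def
    by (rule continuous_map_pullback) (rule continuous_map_product_projection, simp)
  then show ?thesis by (simp add: o_def)
qed

lemma homeomorphic_map_weakstar_ball_uminus:
  "homeomorphic_map (weakstar_ball :: ('a::real_normed_vector \<Rightarrow>\<^sub>L real) topology) weakstar_ball uminus"
proof -
  let ?P = "powertop_real (UNIV :: 'a set)"
  have "continuous_map ?P ?P (\<lambda>f x. - f x)"
    unfolding continuous_map_componentwise_UNIV
    by (intro allI continuous_map_minus continuous_map_product_projection) simp
  then have "continuous_map (weakstar_ball :: ('a \<Rightarrow>\<^sub>L real) topology) ?P ((\<lambda>f x. - f x) \<circ> blinfun_apply)"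
    unfolding weakstar_ball_def by (rule continuous_map_pullback)
  moreover have "(\<lambda>f x. - f x) \<circ> blinfun_apply = blinfun_apply \<circ> (uminus :: ('a \<Rightarrow>\<^sub>L real) \<Rightarrow> _)"
    by (auto simp: fun_eq_iff uminus_blinfun.rep_eq)
  ultimately have "continuous_map (weakstar_ball :: ('a \<Rightarrow>\<^sub>L real) topology) weakstar_ball uminus"
    unfolding weakstar_ball_def
    by (intro continuous_map_pullback') (auto simp: topspace_pullback_topology dual_ball_def)
  then show ?thesis
    unfolding homeomorphic_map_maps homeomorphic_maps_def by (intro exI[of _ uminus]) simp
qed

lemma blinfun_apply_dual_ball:
  "blinfun_apply ` dual_ball = {f :: 'a::real_normed_vector \<Rightarrow> real. linear f \<and> (\<forall>x. \<bar>f x\<bar> \<le> norm x)}"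
proof (intro set_eqI iffI)
  fix f :: "'a \<Rightarrow> real"
  assume "f \<in> blinfun_apply ` dual_ball"
  then obtain w where w: "norm w \<le> 1" "f = blinfun_apply w"
    unfolding dual_ball_def by auto
  have "\<bar>f x\<bar> \<le> norm x" for x
    using norm_blinfun[of w x] mult_right_mono[OF w(1) norm_ge_zero[of x]] w(2) by simp
  then show "f \<in> {f. linear f \<and> (\<forall>x. \<bar>f x\<bar> \<le> norm x)}"
    using w(2) blinfun.bounded_linear_right bounded_linear.linear by auto
next
  fix f :: "'a \<Rightarrow> real"
  assume "f \<in> {f. linear f \<and> (\<forall>x. \<bar>f x\<bar> \<le> norm x)}"
  then have "linear f" "\<And>x. \<bar>f x\<bar> \<le> norm x" by auto
  from dual_ball_Blinfun[OF this] show "f \<in> blinfun_apply ` dual_ball"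
    by (metis image_eqI)
qed

lemma closedin_dual_ball_functions:
  "closedin (powertop_real UNIV) {f :: 'a::real_normed_vector \<Rightarrow> real. linear f \<and> (\<forall>x. \<bar>f x\<bar> \<le> norm x)}"
proof -
  let ?P = "powertop_real (UNIV :: 'a set)"
  have eval: "continuous_map ?P euclideanreal (\<lambda>f. f x)" for x
    by (rule continuous_map_product_projection) simp
  have preimage: "closedin ?P {f. q f \<in> C}" if "continuous_map ?P euclideanreal q" "closed C" for q C
    using closedin_continuous_map_preimage[OF that(1), of C] that(2) by simp
  define K where "K = (\<lambda>(x, y, c). {f :: 'a \<Rightarrow> real. \<bar>f x\<bar> - norm x \<in> {..0}}
      \<inter> {f. f (x + y) - (f x + f y) \<in> {0}} \<inter> {f. f (c *\<^sub>R x) - c * f x \<in> {0}})"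
  have "closedin ?P (K p)" for p
    unfolding K_def case_prod_unfold
    by (intro closedin_Int preimage continuous_map_diff continuous_map_add continuous_map_real_abs
        continuous_map_real_mult_left continuous_map_const[THEN iffD2] eval) auto
  then have "closedin ?P (\<Inter>(range K))"
    by (intro closedin_Inter) auto
  moreover have "\<Inter>(range K) = {f. linear f \<and> (\<forall>x. \<bar>f x\<bar> \<le> norm x)}"
    unfolding K_def by (auto simp: linear_iff)
  ultimately show ?thesis by simp
qed

lemma homeomorphic_map_weakstar_ball_apply:
  "homeomorphic_map (weakstar_ball :: ('a::real_normed_vector \<Rightarrow>\<^sub>L real) topology)
     (subtopology (powertop_real UNIV) (blinfun_apply ` dual_ball)) blinfun_apply"
proof (rule bijective_open_imp_homeomorphic_map)
  let ?X = "weakstar_ball :: ('a \<Rightarrow>\<^sub>L real) topology"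
  have "continuous_map ?X (powertop_real UNIV) (id \<circ> blinfun_apply)"
    unfolding weakstar_ball_def by (rule continuous_map_pullback) simp
  then show "continuous_map ?X (subtopology (powertop_real UNIV) (blinfun_apply ` dual_ball)) blinfun_apply"
    by (simp add: continuous_map_in_subtopology topspace_weakstar_ball image_subset_iff)
  show "open_map ?X (subtopology (powertop_real UNIV) (blinfun_apply ` dual_ball)) blinfun_apply"
    unfolding open_map_def
  proof (intro allI impI)
    fix U
    assume "openin ?X U"
    then obtain V where V: "openin (powertop_real UNIV) V" "U = blinfun_apply -` V \<inter> dual_ball"
      unfolding weakstar_ball_def openin_pullback_topology by blast
    then have "blinfun_apply ` U = blinfun_apply ` dual_ball \<inter> V"
      by auto
    then show "openin (subtopology (powertop_real UNIV) (blinfun_apply ` dual_ball)) (blinfun_apply ` U)"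
      using V(1) by (auto simp: openin_subtopology)
  qed
  show "blinfun_apply ` topspace ?X = topspace (subtopology (powertop_real UNIV) (blinfun_apply ` dual_ball))"
    by (simp add: topspace_weakstar_ball)
  show "inj_on blinfun_apply (topspace ?X)"
    by (simp add: inj_on_def blinfun_eqI)
qed

theorem compact_space_weakstar_ball:
  "compact_space (weakstar_ball :: ('a::real_normed_vector \<Rightarrow>\<^sub>L real) topology)"
proof -
  have "compactin (powertop_real UNIV) (PiE UNIV (\<lambda>x::'a. {- norm x..norm x}))"
    by (simp add: compactin_PiE)
  moreover have "blinfun_apply ` dual_ball \<subseteq> PiE UNIV (\<lambda>x::'a. {- norm x..norm x})"
    unfolding blinfun_apply_dual_ball by (auto simp: PiE_iff abs_le_iff minus_le_iff)
  ultimately have "compactin (powertop_real UNIV) (blinfun_apply ` (dual_ball :: ('a \<Rightarrow>\<^sub>L real) set))"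
    by (rule closed_compactin) (simp add: blinfun_apply_dual_ball closedin_dual_ball_functions)
  then show ?thesis
    using homeomorphic_compact_space[OF homeomorphic_map_imp_homeomorphic_space[OF
          homeomorphic_map_weakstar_ball_apply]] compact_space_subtopology
    by blast
qed

lemma Hausdorff_space_weakstar_ball:
  "Hausdorff_space (weakstar_ball :: ('a::real_normed_vector \<Rightarrow>\<^sub>L real) topology)"
proof -
  have "Hausdorff_space (powertop_real (UNIV :: 'a set))"
    by (simp add: Hausdorff_space_product_topology)
  then have "Hausdorff_space (subtopology (powertop_real UNIV) (blinfun_apply ` (dual_ball :: ('a \<Rightarrow>\<^sub>L real) set)))"
    by (rule Hausdorff_space_subtopology)
  then show ?thesis
    using homeomorphic_Hausdorff_space[OF homeomorphic_map_imp_homeomorphic_space[OF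
          homeomorphic_map_weakstar_ball_apply[where 'a = 'a]]]
    by simp
qed

lemma openin_weakstar_ball_second_category:
  assumes "openin (weakstar_ball :: ('a::real_normed_vector \<Rightarrow>\<^sub>L real) topology) U" "U \<noteq> {}"
  shows "second_category_in weakstar_ball U"
  using Baire_openin_second_category[OF _ assms] compact_space_weakstar_ball Hausdorff_space_weakstar_ball
    compact_imp_locally_compact_space compact_Hausdorff_imp_regular_space
  by blast

section \<open>The quotient norm of \<open>m\<^sub>0(K)\<close>\<close>

lemma linf_diff:
  assumes "f \<in> linf X" "g \<in> linf X"
  shows "(\<lambda>k. f k - g k) \<in> linf X"
proof -
  obtain C D where "\<forall>k\<in>topspace X. \<bar>f k\<bar> \<le> C" "\<forall>k\<in>topspace X. \<bar>g k\<bar> \<le> D"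
    using assms unfolding linf_def by blast
  then have "\<forall>k\<in>topspace X. \<bar>f k - g k\<bar> \<le> C + D"
    by (auto intro: order_trans[OF abs_triangle_ineq4] add_mono)
  then show ?thesis
    unfolding linf_def by blast
qed

lemma abs_le_sup_norm:
  assumes "f \<in> linf X" "k \<in> topspace X"
  shows "\<bar>f k\<bar> \<le> sup_norm X f"
proof -
  obtain C where "\<forall>k\<in>topspace X. \<bar>f k\<bar> \<le> C"
    using assms(1) unfolding linf_def by blast
  then have "bdd_above ((\<lambda>k. \<bar>f k\<bar>) ` topspace X)"
    by (auto intro: bdd_aboveI2)
  then show ?thesis
    unfolding sup_norm_def using assms(2) by (auto intro: cSUP_upper)
qed

lemma sup_norm_nonneg:
  assumes "f \<in> linf X"
  shows "0 \<le> sup_norm X f"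
proof (cases "topspace X = {}")
  case True
  then show ?thesis by (simp add: sup_norm_def)
next
  case False
  then obtain k where "k \<in> topspace X" by blast
  then show ?thesis
    using abs_le_sup_norm[OF assms] abs_ge_zero order_trans by blast
qed

lemma sup_norm_le:
  assumes "0 \<le> M" "\<And>k. k \<in> topspace X \<Longrightarrow> \<bar>f k\<bar> \<le> M"
  shows "sup_norm X f \<le> M"
  unfolding sup_norm_def using assms by (auto intro: cSUP_least)

lemma vanishing_in_mK:
  assumes "\<And>k. k \<in> topspace X \<Longrightarrow> h k = 0"
  shows "h \<in> mK X"
proof -
  have "h \<in> linf X"
    unfolding linf_def using assms by (intro CollectI exI[of _ 0]) simp
  moreover have "{k \<in> topspace X. h k \<noteq> 0} = {}"
    using assms by blast
  then have "first_category_in X {k \<in> topspace X. h k \<noteq> 0}"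
    by (metis first_category_in_empty)
  ultimately show ?thesis
    unfolding mK_def by blast
qed

lemma same_classI:
  assumes "\<And>k. k \<in> topspace X \<Longrightarrow> f k = g k"
  shows "same_class X f g"
  unfolding same_class_def using assms by (intro vanishing_in_mK) simp

lemma m0_norm_le_sup_norm:
  assumes "f \<in> linf X"
  shows "m0_norm X f \<le> sup_norm X f"
proof -
  have zero: "(\<lambda>k. 0) \<in> mK X"
    by (rule vanishing_in_mK) simp
  have "bdd_below ((\<lambda>g. sup_norm X (\<lambda>k. f k - g k)) ` mK X)"
    using assms by (auto intro!: bdd_belowI2 sup_norm_nonneg linf_diff simp: mK_def)
  then have "m0_norm X f \<le> sup_norm X (\<lambda>k. f k - 0)"
    unfolding m0_norm_def using zero by (rule cINF_lower)
  then show ?thesis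
    by simp
qed

lemma m0_norm_ge_on_second_category:
  assumes "f \<in> linf X" "second_category_in X S" "\<And>k. k \<in> S \<Longrightarrow> t \<le> \<bar>f k\<bar>"
  shows "t \<le> m0_norm X f"
  unfolding m0_norm_def
proof (rule cINF_greatest)
  show "mK X \<noteq> {}"
    using vanishing_in_mK[of X "\<lambda>k. 0"] by auto
  fix g
  assume g: "g \<in> mK X"
  then have "\<not> S \<subseteq> {k \<in> topspace X. g k \<noteq> 0}"
    using assms(2) first_category_in_subset unfolding mK_def second_category_in_def by blast
  then obtain k where k: "k \<in> S" "k \<in> topspace X" "g k = 0"
    using assms(2) unfolding second_category_in_def by blast
  then have "t \<le> \<bar>f k - g k\<bar>"
    using assms(3) by simp
  also have "\<dots> \<le> sup_norm X (\<lambda>k. f k - g k)"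
    using abs_le_sup_norm[OF linf_diff[OF assms(1)] k(2)] g unfolding mK_def by blast
  finally show "t \<le> sup_norm X (\<lambda>k. f k - g k)" .
qed

lemma m0_norm_ge_on_second_category_pair:
  assumes "f \<in> linf X" "homeomorphic_map X X h" "second_category_in X S"
    and "\<And>k. k \<in> S \<Longrightarrow> t \<le> \<bar>f k\<bar> \<or> t \<le> \<bar>f (h k)\<bar>"
  shows "t \<le> m0_norm X f"
proof -
  have "S = {k \<in> S. t \<le> \<bar>f k\<bar>} \<union> {k \<in> S. t \<le> \<bar>f (h k)\<bar>}"
    using assms(4) by blast
  then consider "second_category_in X {k \<in> S. t \<le> \<bar>f k\<bar>}"
    | "second_category_in X {k \<in> S. t \<le> \<bar>f (h k)\<bar>}"
    using second_category_in_Un assms(3) by metis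
  then show ?thesis
  proof cases
    case 1
    then show ?thesis
      by (rule m0_norm_ge_on_second_category[OF assms(1)]) simp
  next
    case 2
    then have "second_category_in X (h ` {k \<in> S. t \<le> \<bar>f (h k)\<bar>})"
      by (rule second_category_in_homeomorphic_image[OF assms(2)])
    then show ?thesis
      by (rule m0_norm_ge_on_second_category[OF assms(1)]) auto
  qed
qed

lemma iso_embedding_m0I:
  assumes "\<And>k. k \<in> topspace X \<Longrightarrow> linear (\<lambda>z. E z k)"
    and "C \<ge> 0" "\<And>z k. k \<in> topspace X \<Longrightarrow> \<bar>E z k\<bar> \<le> C * norm z"
    and "c > 0" "\<And>z. c * norm z \<le> m0_norm X (E z)"
  shows "iso_embedding_m0 X E"
proof -
  have linf: "E z \<in> linf X" for z
    unfolding linf_def using assms(3) by blast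
  have "same_class X (E (a *\<^sub>R z + b *\<^sub>R z')) (\<lambda>k. a * E z k + b * E z' k)" for a b z z'
    by (rule same_classI) (simp add: linear_add[OF assms(1)] linear_scale[OF assms(1)])
  moreover have "m0_norm X (E z) \<le> C * norm z" for z
  proof -
    have "sup_norm X (E z) \<le> C * norm z"
      using assms(2,3) by (intro sup_norm_le) simp_all
    then show ?thesis
      using m0_norm_le_sup_norm[OF linf, of z] by linarith
  qed
  ultimately show ?thesis
    unfolding iso_embedding_m0_def using linf assms(4,5) by blast
qed

section \<open>Lower estimates for the quotient norm\<close>

lemma infdist_translate_subspace_le:
  fixes x :: "'a::real_normed_vector"
  assumes "subspace Y" "y \<in> Y"
  shows "infdist (x + y) Y \<le> infdist x Y"
proof -
  have "Y \<noteq> {}"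
    using subspace_0[OF assms(1)] by blast
  have "infdist (x + y) Y \<le> dist x a" if "a \<in> Y" for a
    using infdist_le[OF subspace_add[OF assms(1) that assms(2)], of "x + y"] by (simp add: dist_norm)
  then show ?thesis
    unfolding infdist_notempty[OF \<open>Y \<noteq> {}\<close>, of x] by (intro cINF_greatest \<open>Y \<noteq> {}\<close>)
qed

lemma dense_mod_distance_functional_approx:
  assumes "dense_mod Y D" "subspace Y" "\<And>d. distance_functional Y d (\<psi> d)" "e > 0"
  obtains d where "d \<in> D" "infdist z Y - e \<le> \<psi> d z"
proof -
  define S where "S = {d + y | d y. d \<in> D \<and> y \<in> Y}"
  have "\<forall>\<epsilon>>0. \<exists>u\<in>S. dist u z < \<epsilon>"
    using assms(1) unfolding dense_mod_def S_def[symmetric] closure_approachable[symmetric] by simp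
  then obtain u where "u \<in> S" "dist u z < e / 2"
    using half_gt_zero[OF \<open>e > 0\<close>] by blast
  then obtain d y where dy: "d \<in> D" "y \<in> Y" "dist (d + y) z < e / 2"
    unfolding S_def by blast
  have \<psi>: "linear (\<psi> d)" "\<psi> d y = 0" "\<psi> d d = infdist d Y" "\<bar>\<psi> d (z - (d + y))\<bar> \<le> norm (z - (d + y))"
    using assms(3)[of d] dy(2) unfolding distance_functional_def by auto
  have "infdist z Y \<le> infdist (d + y) Y + dist z (d + y)"
    by (rule infdist_triangle)
  also have "\<dots> \<le> infdist d Y + dist z (d + y)"
    using infdist_translate_subspace_le[OF assms(2) dy(2)] by simp
  finally have "infdist z Y \<le> \<psi> d d + norm (z - (d + y))"
    using \<psi>(3) by (simp add: dist_norm)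
  moreover have "\<psi> d z = \<psi> d d + \<psi> d (z - (d + y))"
    using \<psi>(1,2) by (simp add: linear_diff linear_add)
  moreover have "norm (z - (d + y)) < e / 2"
    using dy(3) by (simp add: dist_norm norm_minus_commute)
  ultimately have "infdist z Y - e \<le> \<psi> d z"
    using \<psi>(4) by linarith
  then show ?thesis
    using that dy(1) by blast
qed

lemma norm_le_from_infdist_bound:
  fixes z :: "'a::real_normed_vector"
  assumes "Y \<noteq> {}" "infdist z Y \<le> m" "\<And>y. y \<in> Y \<Longrightarrow> norm y - 2 * norm (z - y) \<le> m"
  shows "norm z \<le> 4 * m"
proof (rule field_le_epsilon)
  fix e :: real
  assume "e > 0"
  obtain y where y: "y \<in> Y" "dist z y < infdist z Y + e / 3"
  proof (rule ccontr)
    assume "\<not> thesis"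
    then have "infdist z Y + e / 3 \<le> infdist z Y"
      using that unfolding infdist_notempty[OF assms(1)]
      by (intro cINF_greatest assms(1)) (meson not_le)
    then show False
      using \<open>e > 0\<close> by simp
  qed
  have "norm z \<le> norm y + norm (z - y)"
    by (rule norm_triangle_sub)
  also have "\<dots> \<le> m + 3 * norm (z - y)"
    using assms(3)[OF y(1)] by simp
  also have "\<dots> \<le> 4 * m + e"
    using y(2) assms(2) by (simp add: dist_norm)
  finally show "norm z \<le> 4 * m + e" .
qed

lemma evaluation_le_m0_norm:
  fixes F :: "('a::real_normed_vector \<Rightarrow>\<^sub>L real) \<Rightarrow> real"
  assumes "F \<in> linf weakstar_ball" "\<And>w. w \<in> dual_ball \<Longrightarrow> \<bar>F w - blinfun_apply w x\<bar> \<le> c"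
  shows "norm x - c \<le> m0_norm weakstar_ball F"
proof (rule field_le_epsilon)
  fix e :: real
  assume "e > 0"
  define U where "U = {w \<in> topspace weakstar_ball. \<bar>blinfun_apply w x\<bar> \<in> {norm x - e<..}}"
  have "openin weakstar_ball U"
    unfolding U_def
    by (rule openin_continuous_map_preimage[OF continuous_map_real_abs[OF continuous_map_weakstar_ball_apply]])
      simp
  moreover obtain w0 where "w0 \<in> dual_ball" "blinfun_apply w0 x = norm x"
    by (rule norming_functional_exists)
  then have "w0 \<in> U"
    unfolding U_def topspace_weakstar_ball using \<open>e > 0\<close> by simp
  ultimately have "second_category_in weakstar_ball U"
    using openin_weakstar_ball_second_category by blast
  then have "norm x - e - c \<le> m0_norm weakstar_ball F"
  proof (rule m0_norm_ge_on_second_category[OF assms(1)])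
    fix w
    assume "w \<in> U"
    then have "w \<in> dual_ball" "norm x - e < \<bar>blinfun_apply w x\<bar>"
      unfolding U_def topspace_weakstar_ball by auto
    then show "norm x - e - c \<le> \<bar>F w\<bar>"
      using assms(2)[of w] by linarith
  qed
  then show "norm x - c \<le> m0_norm weakstar_ball F + e"
    by simp
qed

lemma infdist_le_m0_norm:
  fixes E :: "'z::real_normed_vector \<Rightarrow> ('w::real_normed_vector \<Rightarrow>\<^sub>L real) \<Rightarrow> real"
  assumes "dense_mod Y D" "subspace Y" "\<And>d. distance_functional Y d (\<psi> d)"
    and "\<And>d. d \<in> D \<Longrightarrow> \<exists>S. second_category_in weakstar_ball S \<and> (\<forall>w\<in>S. E z w + E z (- w) = 2 * \<psi> d z)"
    and "E z \<in> linf weakstar_ball"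
  shows "infdist z Y \<le> m0_norm weakstar_ball (E z)"
proof (rule field_le_epsilon)
  fix e :: real
  assume "e > 0"
  obtain d where "d \<in> D" and d: "infdist z Y - e \<le> \<psi> d z"
    using dense_mod_distance_functional_approx[OF assms(1-3) \<open>e > 0\<close>] by blast
  then obtain S where S: "second_category_in weakstar_ball S" "\<And>w. w \<in> S \<Longrightarrow> E z w + E z (- w) = 2 * \<psi> d z"
    using assms(4) by blast
  have "\<psi> d z \<le> m0_norm weakstar_ball (E z)"
  proof (rule m0_norm_ge_on_second_category_pair[OF assms(5) homeomorphic_map_weakstar_ball_uminus S(1)])
    fix w
    assume "w \<in> S"
    then show "\<psi> d z \<le> \<bar>E z w\<bar> \<or> \<psi> d z \<le> \<bar>E z (- w)\<bar>"
      using S(2)[of w] by linarith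
  qed
  then show "infdist z Y \<le> m0_norm weakstar_ball (E z) + e"
    using d by linarith
qed

lemma evaluation_at_coset_le_m0_norm:
  fixes E :: "'z::real_normed_vector \<Rightarrow> ('w::real_normed_vector \<Rightarrow>\<^sub>L real) \<Rightarrow> real"
  assumes "\<And>w. linear (\<lambda>z. E z w)" "\<And>z w. w \<in> dual_ball \<Longrightarrow> \<bar>E z w\<bar> \<le> C * norm z"
    and "\<And>w. E v w = blinfun_apply w x"
  shows "norm x - C * norm (z - v) \<le> m0_norm weakstar_ball (E z)"
proof (rule evaluation_le_m0_norm)
  show "E z \<in> linf weakstar_ball"
    unfolding linf_def topspace_weakstar_ball using assms(2) by blast
  show "\<bar>E z w - blinfun_apply w x\<bar> \<le> C * norm (z - v)" if "w \<in> dual_ball" for w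
    using assms(2)[OF that, of "z - v"] linear_diff[OF assms(1)] assms(3) by simp
qed

lemma norm_le_m0_norm:
  fixes E :: "'z::real_normed_vector \<Rightarrow> ('w::real_normed_vector \<Rightarrow>\<^sub>L real) \<Rightarrow> real"
  assumes "dense_mod Y D" "subspace Y" "\<And>d. distance_functional Y d (\<psi> d)"
    and "\<And>w. linear (\<lambda>z. E z w)" "\<And>z w. w \<in> dual_ball \<Longrightarrow> \<bar>E z w\<bar> \<le> 2 * norm z"
    and "\<And>y. y \<in> Y \<Longrightarrow> \<exists>x. norm x = norm y \<and> (\<forall>w. E y w = blinfun_apply w x)"
    and "\<And>d z. d \<in> D \<Longrightarrow>
      \<exists>S. second_category_in weakstar_ball S \<and> (\<forall>w\<in>S. E z w + E z (- w) = 2 * \<psi> d z)"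
  shows "norm z \<le> 4 * m0_norm weakstar_ball (E z)"
proof (rule norm_le_from_infdist_bound)
  show "Y \<noteq> {}"
    using subspace_0[OF assms(2)] by blast
  show "infdist z Y \<le> m0_norm weakstar_ball (E z)"
  proof (rule infdist_le_m0_norm[OF assms(1-3) assms(7)])
    show "E z \<in> linf weakstar_ball"
      unfolding linf_def topspace_weakstar_ball using assms(5) by blast
  qed
  show "norm y - 2 * norm (z - y) \<le> m0_norm weakstar_ball (E z)" if y: "y \<in> Y" for y
  proof -
    obtain x where x: "norm x = norm y" "\<And>w. E y w = blinfun_apply w x"
      using assms(6)[OF y] by blast
    show ?thesis
      using evaluation_at_coset_le_m0_norm[OF assms(4,5) x(2), of z] x(1) by simp
  qed
qed

theorem mainTheorem11:
  fixes jZ :: "'y::banach \<Rightarrow> 'z::banach"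
    and jW :: "'y \<Rightarrow> 'w::banach"
    and A :: "'i set"
    and B :: "'i \<Rightarrow> ('w \<Rightarrow>\<^sub>L real) set"
  assumes "linear jZ" and "\<And>y. norm (jZ y) = norm y"
    and "linear jW" and "\<And>y. norm (jW y) = norm y"
    and "has_card_dens_quot (range jZ) A"
    and "\<And>\<alpha>. \<alpha> \<in> A \<Longrightarrow> second_category_in weakstar_ball (B \<alpha>)"
    and "\<And>\<alpha> \<gamma>. \<alpha> \<in> A \<Longrightarrow> \<gamma> \<in> A \<Longrightarrow> \<alpha> \<noteq> \<gamma> \<Longrightarrow> B \<alpha> \<inter> B \<gamma> = {}"
    and "(\<Union>\<alpha>\<in>A. B \<alpha>) \<inter> uminus ` (\<Union>\<alpha>\<in>A. B \<alpha>) = {}"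
  shows "\<exists>E :: 'z \<Rightarrow> ('w \<Rightarrow>\<^sub>L real) \<Rightarrow> real.
           iso_embedding_m0 weakstar_ball E \<and>
           (\<forall>y. same_class weakstar_ball (E (jZ y)) (\<lambda>w'. blinfun_apply w' (jW y)))"
proof -
  let ?X = "weakstar_ball :: ('w \<Rightarrow>\<^sub>L real) topology"
  define Y where "Y = range jZ"
  have Y: "subspace Y"
    unfolding Y_def using linear_subspace_image[OF assms(1) subspace_UNIV] by simp
  obtain D fA where dense: "dense_mod Y D" and fA: "bij_betw fA A D"
    using assms(5) unfolding has_card_dens_quot_def eqpoll_def Y_def by blast
  obtain \<psi> where \<psi>: "\<And>d. distance_functional Y d (\<psi> d)"
    using distance_functional_exists[OF Y] by metis
  obtain E :: "'z \<Rightarrow> ('w \<Rightarrow>\<^sub>L real) \<Rightarrow> real" where E: "\<And>w. linear (\<lambda>z. E z w)"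
    "\<And>z w. w \<in> dual_ball \<Longrightarrow> \<bar>E z w\<bar> \<le> 2 * norm z" "\<And>y w. E (jZ y) w = blinfun_apply w (jW y)"
    "\<And>\<alpha> w z. \<alpha> \<in> A \<Longrightarrow> w \<in> B \<alpha> \<Longrightarrow> E z w + E z (- w) = 2 * \<psi> (fA \<alpha>) z"
    using glued_representation_exists[of jZ jW "\<lambda>\<alpha>. \<psi> (fA \<alpha>)" A B] assms(1-4,7,8) \<psi>
    unfolding distance_functional_def Y_def by auto
  have lower: "norm z \<le> 4 * m0_norm ?X (E z)" for z
  proof (rule norm_le_m0_norm[OF dense Y \<psi> E(1,2)])
    show "\<exists>x. norm x = norm y \<and> (\<forall>w. E y w = blinfun_apply w x)" if "y \<in> Y" for y
      using that E(3) assms(2,4) unfolding Y_def by (metis rangeE)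
    show "\<exists>S. second_category_in ?X S \<and> (\<forall>w\<in>S. E z w + E z (- w) = 2 * \<psi> d z)" if "d \<in> D" for d z
      using that fA assms(6) E(4) unfolding bij_betw_def by blast
  qed
  have "iso_embedding_m0 ?X E"
  proof (rule iso_embedding_m0I[of ?X E 2 "1 / 4"])
    show "\<bar>E z w\<bar> \<le> 2 * norm z" if "w \<in> topspace ?X" for z w
      using E(2) that unfolding topspace_weakstar_ball by blast
    show "1 / 4 * norm z \<le> m0_norm ?X (E z)" for z
      using lower[of z] by linarith
  qed (use E(1) in simp_all)
  moreover have "same_class ?X (E (jZ y)) (\<lambda>w'. blinfun_apply w' (jW y))" for y
    using E(3) by (intro same_classI) simp
  ultimately show ?thesis
    by blast
qed

end
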